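(* Let $g:\{0,1\}^n\to\{0,1\}^{m(n)}$ be computable by polynomial-size circuits with $m(n)>n$. If the ensemble $(g(U_n))_{n\in\mathbb{N}}$ is both $\mathsf{NP}/\mathsf{poly}$-unpredictable and $\mathsf{coNP}/\mathsf{poly}$-unpredictable (i.e. $\cup$-unpredictable), then $g$ is super-bits (in the polynomial-security sense below).
   Context: $U_n$ is the uniform distribution on $\{0,1\}^n$. A nondeterministic circuit $D$ accepts $x$ iff some assignment to its nondeterministic inputs makes it output 1; a co-nondeterministic circuit rejects $x$ iff some assignment makes it output 0. $\mathsf{NP}/\mathsf{poly}$ (resp. $\mathsf{coNP}/\mathsf{poly}$) algorithms are nondeterministic (resp. co-nondeterministic) polynomial-size circuit families. $g$ is called super-bits if for every nondeterministic polynomial-size circuit family $D$, every polynomial $p$ and all sufficiently large $n$, $\Pr[D(U_{m(n)})=1]-\Pr[D(g(U_n))=1]<1/p(n)$. For $\mathcal{K}\in\{\mathsf{NP}/\mathsf{poly},\mathsf{coNP}/\mathsf{poly}\}$, an ensemble $(Z_n)$ is $\mathcal{K}$-predictable if there exist an algorithm $\mathcal{A}$ in $\mathcal{K}$, a polynomial $p$, and infinitely many $n$ each with some $i=i(n)<|Z_n|$ such that $\Pr[\mathcal{A}(Z_n[1\ldots i])=Z_n[i+1]]\ge 1/2+1/p(n)$, and $\mathcal{K}$-unpredictable otherwise. *)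

theory Defs
  imports "HOL-Probability.Probability" "HOL-Computational_Algebra.Polynomial"
begin

text \<open>Wires 0..n-1 carry the input bits; gate number j produces wire n+j.
  A gate may only read wires that already exist; reading a non-existent wire
  yields False.\<close>

datatype gate = GConst bool | GNot nat | GAnd nat nat | GOr nat nat

definition rd :: "bool list \<Rightarrow> nat \<Rightarrow> bool" where
  "rd vs j = (if j < length vs then vs ! j else False)"

fun gate_val :: "gate \<Rightarrow> bool list \<Rightarrow> bool" where
  "gate_val (GConst b) vs = b"
| "gate_val (GNot i) vs = (\<not> rd vs i)"
| "gate_val (GAnd i j) vs = (rd vs i \<and> rd vs j)"
| "gate_val (GOr i j) vs = (rd vs i \<or> rd vs j)"

definition eval_wires :: "gate list \<Rightarrow> bool list \<Rightarrow> bool list" where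
  "eval_wires gs x = foldl (\<lambda>vs g. vs @ [gate_val g vs]) x gs"

type_synonym circuit = "gate list \<times> nat list"

definition circ_eval :: "circuit \<Rightarrow> bool list \<Rightarrow> bool list" where
  "circ_eval C x = map (rd (eval_wires (fst C) x)) (snd C)"

definition circ_size :: "circuit \<Rightarrow> nat" where
  "circ_size C = length (fst C) + length (snd C)"

definition circ_dec :: "circuit \<Rightarrow> bool list \<Rightarrow> bool" where
  "circ_dec C x = (case circ_eval C x of [] \<Rightarrow> False | b # _ \<Rightarrow> b)"

text \<open>A (co-)nondeterministic circuit: number k of nondeterministic input bits
  together with a circuit reading the input x followed by the k witness bits.\<close>
type_synonym nd_circuit = "nat \<times> circuit"

definition nd_size :: "nd_circuit \<Rightarrow> nat" where
  "nd_size D = fst D + circ_size (snd D)"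

definition nd_out :: "nd_circuit \<Rightarrow> bool list \<Rightarrow> bool" where
  "nd_out D x = (\<exists>w. length w = fst D \<and> circ_dec (snd D) (x @ w))"

definition cond_out :: "nd_circuit \<Rightarrow> bool list \<Rightarrow> bool" where
  "cond_out D x = (\<forall>w. length w = fst D \<longrightarrow> circ_dec (snd D) (x @ w))"

definition poly_bounded :: "(nat \<Rightarrow> nat) \<Rightarrow> bool" where
  "poly_bounded f \<longleftrightarrow> (\<exists>c k. \<forall>n. f n \<le> c * n ^ k + c)"

definition pos_poly :: "real poly \<Rightarrow> bool" where
  "pos_poly p \<longleftrightarrow> lead_coeff p > 0"

definition bitstrings :: "nat \<Rightarrow> bool list set" where
  "bitstrings n = {xs. length xs = n}"

definition U :: "nat \<Rightarrow> bool list pmf" where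
  "U n = pmf_of_set (bitstrings n)"

definition poly_circuit_computable :: "(bool list \<Rightarrow> bool list) \<Rightarrow> bool" where
  "poly_circuit_computable g \<longleftrightarrow>
     (\<exists>C :: nat \<Rightarrow> circuit. poly_bounded (\<lambda>n. circ_size (C n)) \<and>
        (\<forall>n x. length x = n \<longrightarrow> circ_eval (C n) x = g x))"

definition predictable ::
  "(nd_circuit \<Rightarrow> bool list \<Rightarrow> bool) \<Rightarrow> (nat \<Rightarrow> bool list pmf) \<Rightarrow> (nat \<Rightarrow> nat) \<Rightarrow> bool" where
  "predictable sem Z len \<longleftrightarrow>
     (\<exists>A :: nat \<Rightarrow> nd_circuit. poly_bounded (\<lambda>n. nd_size (A n)) \<and>
       (\<exists>p. pos_poly p \<and>
          infinite {n. \<exists>i < len n.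
             measure_pmf.prob (Z n) {z. sem (A n) (take i z) = z ! i}
               \<ge> 1/2 + 1 / poly p (real n)}))"

definition NP_unpredictable :: "(nat \<Rightarrow> bool list pmf) \<Rightarrow> (nat \<Rightarrow> nat) \<Rightarrow> bool" where
  "NP_unpredictable Z len \<longleftrightarrow> \<not> predictable nd_out Z len"

definition coNP_unpredictable :: "(nat \<Rightarrow> bool list pmf) \<Rightarrow> (nat \<Rightarrow> nat) \<Rightarrow> bool" where
  "coNP_unpredictable Z len \<longleftrightarrow> \<not> predictable cond_out Z len"

definition super_bits :: "(bool list \<Rightarrow> bool list) \<Rightarrow> (nat \<Rightarrow> nat) \<Rightarrow> bool" where
  "super_bits g m \<longleftrightarrow>
     (\<forall>D :: nat \<Rightarrow> nd_circuit. poly_bounded (\<lambda>n. nd_size (D n)) \<longrightarrow>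
       (\<forall>p. pos_poly p \<longrightarrow>
          (\<forall>\<^sub>F n in sequentially.
             measure_pmf.prob (U (m n)) {y. nd_out (D n) y}
             - measure_pmf.prob (map_pmf g (U n)) {y. nd_out (D n) y}
             < 1 / poly p (real n))))"

end

theory Submission
  imports Defs
begin

text \<open>Yao's hybrid argument, with nondeterminism on the distinguisher's side. Suppose a
  nondeterministic circuit D accepts U_m more often than g(U_n) by 1/p(n) for infinitely many n.
  The hybrids H_i (first i bits of g(U_n), the remaining m - i bits uniform) run from U_m to
  g(U_n), so two consecutive ones differ by at least 1/(p(n) m). Averaging over the guessed
  bit b and the uniform tail r then fixes b and r such that "output the complement of b if D
  accepts the prefix followed by b r, else b" predicts the next bit with advantage 1/(p(n) m).
  Hardwiring b and r, this predictor is D itself when b = 0 and the negation of D when b = 1,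
  i.e. an NP/poly or a coNP/poly predictor, and one of the two values of b occurs for infinitely
  many n.\<close>

lemma bitstrings_eq_lists: "bitstrings k = {xs. set xs \<subseteq> (UNIV :: bool set) \<and> length xs = k}"
  by (auto simp: bitstrings_def)

lemma finite_bitstrings [simp]: "finite (bitstrings k)"
  unfolding bitstrings_eq_lists by (rule finite_lists_length_eq) simp

lemma card_bitstrings: "card (bitstrings k) = 2 ^ k"
  using card_lists_length_eq[of "UNIV :: bool set" k] by (simp add: bitstrings_eq_lists)

lemma bitstrings_nonempty: "bitstrings k \<noteq> {}"
  using card_bitstrings[of k] by force

lemma bitstrings_0: "bitstrings 0 = {[]}"
  by (auto simp: bitstrings_def)

lemma sum_bitstrings_Suc:
  "(\<Sum>r\<in>bitstrings (Suc k). f r) = (\<Sum>r\<in>bitstrings k. f (True # r) + f (False # r))"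
proof -
  have eq: "bitstrings (Suc k) = (\<lambda>(b, r). b # r) ` (UNIV \<times> bitstrings k)"
    by (auto simp: bitstrings_def length_Suc_conv)
  have inj: "inj_on (\<lambda>(b, r). b # r) (UNIV \<times> bitstrings k)"
    by (auto simp: inj_on_def)
  have "(\<Sum>r\<in>bitstrings (Suc k). f r) = (\<Sum>(b, r)\<in>UNIV \<times> bitstrings k. f (b # r))"
    unfolding eq by (subst sum.reindex[OF inj]) (simp add: case_prod_beta)
  also have "\<dots> = (\<Sum>b\<in>UNIV. \<Sum>r\<in>bitstrings k. f (b # r))"
    by (simp add: sum.cartesian_product)
  finally show ?thesis
    by (simp add: UNIV_bool sum.distrib add.commute)
qed

lemma prob_U: "measure_pmf.prob (U k) S = (\<Sum>y\<in>bitstrings k. of_bool (y \<in> S)) / 2 ^ k"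
proof -
  have "measure_pmf.prob (U k) S = card (bitstrings k \<inter> S) / card (bitstrings k)"
    unfolding U_def by (rule measure_pmf_of_set[OF bitstrings_nonempty finite_bitstrings])
  also have "real (card (bitstrings k \<inter> S)) = (\<Sum>y\<in>bitstrings k. of_bool (y \<in> S))"
    by (simp add: sum.If_cases Int_commute)
  finally show ?thesis by (simp add: card_bitstrings)
qed

lemma prob_map_U:
  "measure_pmf.prob (map_pmf g (U k)) S = (\<Sum>x\<in>bitstrings k. of_bool (g x \<in> S)) / 2 ^ k"
  by (simp add: prob_U)

lemma set_pmf_U: "set_pmf (U k) = bitstrings k"
  unfolding U_def by (simp add: bitstrings_nonempty)

fun gate_rename :: "(nat \<Rightarrow> nat) \<Rightarrow> gate \<Rightarrow> gate" where
  "gate_rename f (GConst b) = GConst b"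
| "gate_rename f (GNot i) = GNot (f i)"
| "gate_rename f (GAnd i j) = GAnd (f i) (f j)"
| "gate_rename f (GOr i j) = GOr (f i) (f j)"

lemma eval_wires_Nil [simp]: "eval_wires [] x = x"
  by (simp add: eval_wires_def)

lemma eval_wires_Cons: "eval_wires (g # gs) x = eval_wires gs (x @ [gate_val g x])"
  by (simp add: eval_wires_def)

lemma eval_wires_append: "eval_wires (gs @ hs) x = eval_wires hs (eval_wires gs x)"
  by (simp add: eval_wires_def)

lemma length_eval_wires [simp]: "length (eval_wires gs x) = length x + length gs"
  by (induction gs arbitrary: x) (auto simp: eval_wires_Cons)

lemma eval_wires_map_GConst: "eval_wires (map GConst c) x = x @ c"
  by (induction c arbitrary: x) (auto simp: eval_wires_Cons)

lemma gate_val_rename: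
  assumes "\<forall>j. rd vs' (f j) = rd vs j"
  shows "gate_val (gate_rename f g) vs' = gate_val g vs"
  using assms by (cases g) auto

lemma eval_wires_rename:
  assumes "length vs' = length vs" "L \<le> length vs" "\<forall>j\<ge>L. f j = j" "\<forall>j<L. f j < L"
    and "\<forall>j. rd vs' (f j) = rd vs j"
  shows "\<forall>j. rd (eval_wires (map (gate_rename f) gs) vs') (f j) = rd (eval_wires gs vs) j"
  using assms
proof (induction gs arbitrary: vs vs')
  case Nil
  then show ?case by simp
next
  case (Cons g gs)
  define v where "v = gate_val g vs"
  have gv: "gate_val (gate_rename f g) vs' = v"
    unfolding v_def by (rule gate_val_rename[OF Cons.prems(5)])
  have "rd (vs' @ [v]) (f j) = rd (vs @ [v]) j" for j
  proof (cases "j < length vs")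
    case True
    then have "f j < length vs'"
      using Cons.prems by (cases "j < L") force+
    then show ?thesis
      using True Cons.prems(5)[rule_format, of j] by (simp add: rd_def nth_append)
  next
    case False
    then show ?thesis
      using Cons.prems by (simp add: rd_def nth_append)
  qed
  then show ?case
    using Cons.IH[of "vs' @ [v]" "vs @ [v]"] Cons.prems by (simp add: eval_wires_Cons gv v_def)
qed

text \<open>For inputs y (length i), c and w (length k), the wire layout y c w of a circuit is
  rearranged into y w c: this is the layout obtained when y w is the actual input and c is
  supplied by constant gates.\<close>

definition move_block_wires :: "nat \<Rightarrow> nat \<Rightarrow> nat \<Rightarrow> nat \<Rightarrow> nat" where
  "move_block_wires i l k j =
     (if j < i then j else if j < i + l then j + k else if j < i + l + k then j - l else j)"

definition circ_fix_block :: "nat \<Rightarrow> bool list \<Rightarrow> nat \<Rightarrow> circuit \<Rightarrow> circuit" where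
  "circ_fix_block i c k C =
     (map GConst c @ map (gate_rename (move_block_wires i (length c) k)) (fst C),
      map (move_block_wires i (length c) k) (snd C))"

lemma rd_move_block_wires:
  assumes "length y = i" "length w = k"
  shows "rd (y @ w @ c) (move_block_wires i (length c) k j) = rd (y @ c @ w) j"
proof -
  consider "j < i" | "i \<le> j" "j < i + length c"
    | t where "j = i + length c + t" "t < k" | "i + length c + k \<le> j"
    by (metis add_less_cancel_left le_add_diff_inverse not_le)
  then show ?thesis
    by cases (use assms in \<open>auto simp: move_block_wires_def rd_def nth_append\<close>)
qed

lemma circ_eval_fix_block:
  assumes "length y = i" "length w = k"
  shows "circ_eval (circ_fix_block i c k C) (y @ w) = circ_eval C (y @ c @ w)"
proof -
  let ?f = "move_block_wires i (length c) k"
  have "\<forall>j. rd (eval_wires (map (gate_rename ?f) (fst C)) (y @ w @ c)) (?f j)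
           = rd (eval_wires (fst C) (y @ c @ w)) j"
    by (rule eval_wires_rename[where L = "i + length c + k"])
      (use assms rd_move_block_wires in \<open>auto simp: move_block_wires_def\<close>)
  then show ?thesis
    by (simp add: circ_fix_block_def circ_eval_def eval_wires_append eval_wires_map_GConst)
qed

lemma circ_dec_fix_block:
  assumes "length y = i" "length w = k"
  shows "circ_dec (circ_fix_block i c k C) (y @ w) = circ_dec C (y @ c @ w)"
  using circ_eval_fix_block[OF assms] by (simp add: circ_dec_def)

lemma circ_size_fix_block: "circ_size (circ_fix_block i c k C) = length c + circ_size C"
  by (simp add: circ_fix_block_def circ_size_def)

definition circ_negate :: "circuit \<Rightarrow> nat \<Rightarrow> circuit" where
  "circ_negate C l =
     (fst C @ [case snd C of [] \<Rightarrow> GConst True | o1 # _ \<Rightarrow> GNot o1], [l + length (fst C)])"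

lemma circ_dec_negate:
  assumes "length x = l"
  shows "circ_dec (circ_negate C l) x = (\<not> circ_dec C x)"
  using assms
  by (cases "snd C")
    (auto simp: circ_negate_def circ_dec_def circ_eval_def eval_wires_append eval_wires_Cons
      rd_def nth_append)

lemma circ_size_negate: "circ_size (circ_negate C l) \<le> circ_size C + 2"
  by (simp add: circ_negate_def circ_size_def)

text \<open>Since d accepts uniform strings more often than generator outputs,
  acceptance is evidence that b is the wrong bit.\<close>

definition next_bit_guess :: "(bool list \<Rightarrow> bool) \<Rightarrow> bool list \<Rightarrow> bool \<Rightarrow> bool list \<Rightarrow> bool" where
  "next_bit_guess d u b r = (if d (u @ b # r) then \<not> b else b)"

text \<open>For b = False the guess is d itself, for b = True its negation; with d nondeterministic
  this is an NP/poly resp. coNP/poly predictor.\<close>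

definition guess_circuit :: "nat \<Rightarrow> bool \<Rightarrow> bool list \<Rightarrow> nd_circuit \<Rightarrow> nd_circuit" where
  "guess_circuit i b r D =
     (let C = circ_fix_block i (b # r) (fst D) (snd D)
      in (fst D, if b then circ_negate C (i + fst D) else C))"

lemma guess_circuit_correct:
  assumes "length u = i"
  shows "(if b then cond_out else nd_out) (guess_circuit i b r D) u = next_bit_guess (nd_out D) u b r"
  using assms
  by (auto simp: guess_circuit_def next_bit_guess_def nd_out_def cond_out_def Let_def
      circ_dec_negate circ_dec_fix_block)

lemma nd_size_guess_circuit: "nd_size (guess_circuit i b r D) \<le> nd_size D + length r + 3"
  using circ_size_negate[of "circ_fix_block i (b # r) (fst D) (snd D)" "i + fst D"]
  by (cases b) (simp_all add: guess_circuit_def nd_size_def circ_size_fix_block Let_def)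

lemma exists_ge_average:
  fixes f :: "'a \<Rightarrow> real"
  assumes "finite A" "A \<noteq> {}"
  shows "\<exists>a\<in>A. sum f A / card A \<le> f a"
proof (rule ccontr)
  assume "\<not> ?thesis"
  then have "sum f A < (\<Sum>a\<in>A. sum f A / card A)"
    using assms by (intro sum_strict_mono) (auto simp: not_le)
  then show False
    using assms by simp
qed

definition hybrid :: "(bool list \<Rightarrow> bool) \<Rightarrow> (bool list \<Rightarrow> bool list) \<Rightarrow> nat \<Rightarrow> nat \<Rightarrow> nat \<Rightarrow> real" where
  "hybrid d G n M i =
     (\<Sum>x\<in>bitstrings n. \<Sum>r\<in>bitstrings (M - i). of_bool (d (take i (G x) @ r))) / 2 ^ (n + (M - i))"

lemma hybrid_0: "hybrid d G n M 0 = measure_pmf.prob (U M) {y. d y}"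
  by (simp add: hybrid_def prob_U card_bitstrings power_add)

lemma hybrid_last:
  assumes "\<forall>x\<in>bitstrings n. length (G x) = M"
  shows "hybrid d G n M M = measure_pmf.prob (map_pmf G (U n)) {y. d y}"
  using assms unfolding hybrid_def prob_map_U by (simp add: bitstrings_0)

lemma sum_UNIV_bool_times:
  "(\<Sum>(b, r)\<in>UNIV \<times> A. f b r) = (\<Sum>r\<in>A. f True r + f False r)"
  by (simp add: sum.cartesian_product[symmetric] UNIV_bool sum.distrib add.commute)

lemma next_bit_guess_correct_sum:
  "of_bool (next_bit_guess d u True r = c) + of_bool (next_bit_guess d u False r = c)
     = 1 + (of_bool (d (u @ True # r)) + of_bool (d (u @ False # r)))
         - 2 * (of_bool (d (u @ c # r)) :: real)"
  by (cases c) (auto simp: next_bit_guess_def)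

lemma average_next_bit_guess:
  assumes len: "\<forall>x\<in>bitstrings n. length (G x) = M" and "i < M"
  shows "(\<Sum>(b, r)\<in>UNIV \<times> bitstrings (M - Suc i).
            measure_pmf.prob (map_pmf G (U n)) {z. next_bit_guess d (take i z) b r = z ! i})
         = 2 ^ (M - i) * (1/2 + hybrid d G n M i - hybrid d G n M (Suc i))"
proof -
  define k where "k = M - Suc i"
  have Mi: "M - i = Suc k"
    using \<open>i < M\<close> by (simp add: k_def)
  let ?B = bitstrings and ?a = "\<lambda>x. take i (G x)"
  let ?acc = "\<lambda>x r. of_bool (d (?a x @ r)) :: real"
  have accept_both: "(\<Sum>r\<in>?B k. \<Sum>x\<in>?B n. ?acc x (True # r) + ?acc x (False # r))
      = 2 ^ (n + Suc k) * hybrid d G n M i"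
    by (simp add: hybrid_def Mi sum.swap[of _ "?B k"] sum_bitstrings_Suc)
  have accept_true: "(\<Sum>r\<in>?B k. \<Sum>x\<in>?B n. ?acc x (G x ! i # r))
      = 2 ^ (n + k) * hybrid d G n M (Suc i)"
    unfolding hybrid_def k_def
    by (subst sum.swap)
      (use len \<open>i < M\<close> in \<open>simp add: bitstrings_def take_Suc_conv_app_nth\<close>)
  have "(\<Sum>(b, r)\<in>UNIV \<times> ?B k.
            measure_pmf.prob (map_pmf G (U n)) {z. next_bit_guess d (take i z) b r = z ! i})
      = (\<Sum>r\<in>?B k. \<Sum>x\<in>?B n. 1 + (?acc x (True # r) + ?acc x (False # r))
                                   - 2 * ?acc x (G x ! i # r)) / 2 ^ n"
    unfolding sum_UNIV_bool_times prob_map_U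
    by (simp add: sum_divide_distrib sum.distrib[symmetric] add_divide_distrib[symmetric]
        next_bit_guess_correct_sum del: sum_of_bool_eq)
  also have "\<dots> = ((\<Sum>r\<in>?B k. \<Sum>x\<in>?B n. 1)
                   + (\<Sum>r\<in>?B k. \<Sum>x\<in>?B n. ?acc x (True # r) + ?acc x (False # r))
                   - 2 * (\<Sum>r\<in>?B k. \<Sum>x\<in>?B n. ?acc x (G x ! i # r))) / 2 ^ n"
    by (simp add: sum.distrib sum_subtractf sum_distrib_left del: sum_of_bool_eq)
  also have "\<dots> = (2 ^ k * 2 ^ n + 2 ^ (n + Suc k) * hybrid d G n M i
                   - 2 * (2 ^ (n + k) * hybrid d G n M (Suc i))) / 2 ^ n"
    unfolding accept_both accept_true by (simp add: card_bitstrings)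
  also have "\<dots> = 2 ^ (M - i) * (1/2 + hybrid d G n M i - hybrid d G n M (Suc i))"
    by (simp add: Mi power_add field_simps)
  finally show ?thesis
    by (simp add: k_def)
qed

lemma next_bit_predictor:
  assumes len: "\<forall>x\<in>bitstrings n. length (G x) = M" and "M > 0"
  shows "\<exists>i<M. \<exists>b r. length r = M - Suc i \<and>
           1/2 + (measure_pmf.prob (U M) {y. d y} - measure_pmf.prob (map_pmf G (U n)) {y. d y}) / M
             \<le> measure_pmf.prob (map_pmf G (U n)) {z. next_bit_guess d (take i z) b r = z ! i}"
proof -
  let ?h = "hybrid d G n M"
  have "\<exists>i\<in>{..<M}. (\<Sum>i<M. ?h i - ?h (Suc i)) / card {..<M} \<le> ?h i - ?h (Suc i)"
    using \<open>M > 0\<close> by (intro exists_ge_average) auto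
  then obtain i where "i < M" and gap: "(?h 0 - ?h M) / M \<le> ?h i - ?h (Suc i)"
    unfolding sum_lessThan_telescope' card_lessThan by blast
  let ?pairs = "(UNIV :: bool set) \<times> bitstrings (M - Suc i)"
  let ?guess = "\<lambda>(b, r). measure_pmf.prob (map_pmf G (U n)) {z. next_bit_guess d (take i z) b r = z ! i}"
  have "M - i = Suc (M - Suc i)"
    using \<open>i < M\<close> by (simp add: Suc_diff_Suc)
  then have "card ?pairs = 2 ^ (M - i)"
    by (simp add: card_cartesian_product card_bitstrings)
  then have average: "sum ?guess ?pairs / card ?pairs = 1/2 + ?h i - ?h (Suc i)"
    using average_next_bit_guess[OF len \<open>i < M\<close>, of d] by simp
  have "finite ?pairs" "?pairs \<noteq> {}"
    using bitstrings_nonempty by auto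
  then obtain br where "br \<in> ?pairs" and "sum ?guess ?pairs / card ?pairs \<le> ?guess br"
    by (blast dest: exists_ge_average)
  moreover obtain b r where "br = (b, r)"
    by (cases br)
  ultimately have "length r = M - Suc i"
    and "1/2 + (?h 0 - ?h M) / M
           \<le> measure_pmf.prob (map_pmf G (U n)) {z. next_bit_guess d (take i z) b r = z ! i}"
    using gap average by (auto simp: bitstrings_def)
  then show ?thesis
    unfolding hybrid_0 hybrid_last[OF len] using \<open>i < M\<close> by blast
qed

lemma poly_bounded_mono: "poly_bounded g \<Longrightarrow> (\<And>n. f n \<le> g n) \<Longrightarrow> poly_bounded f"
  unfolding poly_bounded_def by (meson order_trans)

lemma poly_bounded_add:
  assumes "poly_bounded f" "poly_bounded g"
  shows "poly_bounded (\<lambda>n. f n + g n + c)"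
proof -
  obtain c1 k1 c2 k2 where f: "\<And>n. f n \<le> c1 * n ^ k1 + c1" and g: "\<And>n. g n \<le> c2 * n ^ k2 + c2"
    using assms unfolding poly_bounded_def by blast
  have pow: "n ^ k \<le> n ^ (k1 + k2) + 1" if "k \<le> k1 + k2" for n k :: nat
    using that by (cases "n = 0") (simp_all add: power_0_left le_SucI power_increasing)
  have "f n + g n + c \<le> (2 * c1 + 2 * c2 + c) * n ^ (k1 + k2) + (2 * c1 + 2 * c2 + c)" for n
  proof -
    have "c1 * n ^ k1 \<le> c1 * (n ^ (k1 + k2) + 1)" "c2 * n ^ k2 \<le> c2 * (n ^ (k1 + k2) + 1)"
      using pow[of k1 n] pow[of k2 n] by (simp_all only: mult_le_mono2 le_add1 le_add2)
    then have "f n + g n + c \<le> (c1 * (n ^ (k1 + k2) + 1) + c1) + (c2 * (n ^ (k1 + k2) + 1) + c2) + c"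
      using f[of n] g[of n] by linarith
    also have "\<dots> \<le> (2 * c1 + 2 * c2 + c) * n ^ (k1 + k2) + (2 * c1 + 2 * c2 + c)"
      by (simp add: algebra_simps)
    finally show ?thesis .
  qed
  then show ?thesis
    unfolding poly_bounded_def by blast
qed

lemma poly_bounded_output_length:
  assumes "\<And>x. length (g x) = m (length x)" and "poly_circuit_computable g"
  shows "poly_bounded m"
proof -
  obtain C where size: "poly_bounded (\<lambda>n. circ_size (C n))"
    and C: "\<And>n x. length x = n \<Longrightarrow> circ_eval (C n) x = g x"
    using assms(2) unfolding poly_circuit_computable_def by blast
  have "m n = length (circ_eval (C n) (replicate n False))" for n
    using assms(1) C[of "replicate n False" n] by simp
  then have "m n \<le> circ_size (C n)" for n
    by (simp add: circ_eval_def circ_size_def)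
  then show ?thesis
    using poly_bounded_mono[OF size] by blast
qed

lemma pos_poly_mult_poly_bounded:
  assumes "pos_poly p" and "poly_bounded f"
  obtains q where "pos_poly q"
    and "\<forall>\<^sub>F n in sequentially. 0 < poly p (real n) \<and> poly p (real n) * f n \<le> poly q (real n)"
proof -
  obtain c k where f: "\<And>n. f n \<le> c * n ^ k + c"
    using assms(2) unfolding poly_bounded_def by blast
  have lc: "lead_coeff p > 0"
    using assms(1) unfolding pos_poly_def .
  obtain x0 where x0: "\<And>x. x \<ge> x0 \<Longrightarrow> poly p x \<ge> lead_coeff p"
    using poly_pinfty_gt_lc[OF lc] by blast
  define q where "q = smult (2 * (real c + 1)) (p * monom 1 k)"
  have "pos_poly q"
    using lc by (simp add: q_def pos_poly_def lead_coeff_smult lead_coeff_mult degree_monom_eq)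
  moreover have "0 < poly p (real n) \<and> poly p (real n) * f n \<le> poly q (real n)"
    if "n \<ge> max (nat \<lceil>x0\<rceil>) 1" for n
  proof -
    have "real n \<ge> x0" "n \<ge> 1"
      using that by linarith+
    then have pos: "poly p (real n) > 0" and "real n ^ k \<ge> 1"
      using x0[of "real n"] lc by auto
    have "real (f n) \<le> real c * real n ^ k + real c"
      using f[of n] by (metis of_nat_add of_nat_le_iff of_nat_mult of_nat_power)
    also have "\<dots> \<le> 2 * (real c + 1) * real n ^ k"
      using \<open>real n ^ k \<ge> 1\<close> mult_left_mono[of 1 "real n ^ k" "real c"] by (simp add: algebra_simps)
    finally have "poly p (real n) * f n \<le> poly p (real n) * (2 * (real c + 1) * real n ^ k)"
      using pos by (intro mult_left_mono) auto
    then show ?thesis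
      using pos by (simp add: q_def poly_monom algebra_simps)
  qed
  then have "\<forall>\<^sub>F n in sequentially. 0 < poly p (real n) \<and> poly p (real n) * f n \<le> poly q (real n)"
    by (rule eventually_sequentiallyI)
  ultimately show ?thesis
    using that by blast
qed

lemma predictable_of_frequent_next_bit_guess:
  assumes guess: "\<exists>\<^sub>F n in sequentially. \<exists>i<len n. \<exists>r. length r = len n - Suc i \<and>
      1/2 + 1 / poly q (real n)
        \<le> measure_pmf.prob (Z n) {z. next_bit_guess (nd_out (D n)) (take i z) b r = z ! i}"
    and D: "poly_bounded (\<lambda>n. nd_size (D n))" and "poly_bounded len" and "pos_poly q"
    and len: "\<And>n z. z \<in> set_pmf (Z n) \<Longrightarrow> length z = len n"
  shows "predictable (if b then cond_out else nd_out) Z len"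
proof -
  define good where "good n i r \<longleftrightarrow> i < len n \<and> length r = len n - Suc i \<and>
      1/2 + 1 / poly q (real n)
        \<le> measure_pmf.prob (Z n) {z. next_bit_guess (nd_out (D n)) (take i z) b r = z ! i}"
    for n i r
  have "\<exists>i r. length r \<le> len n \<and> ((\<exists>i r. good n i r) \<longrightarrow> good n i r)" for n
  proof (cases "\<exists>i r. good n i r")
    case True
    then obtain i r where "good n i r"
      by blast
    then show ?thesis
      by (intro exI[of _ i] exI[of _ r]) (auto simp: good_def)
  qed (auto intro: exI[of _ "[]"])
  then obtain I R where R: "\<And>n. length (R n) \<le> len n"
    and IR: "\<And>n. \<exists>i r. good n i r \<Longrightarrow> good n (I n) (R n)"
    by metis
  define A where "A n = guess_circuit (I n) b (R n) (D n)" for n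
  have "nd_size (A n) \<le> nd_size (D n) + len n + 3" for n
    using nd_size_guess_circuit[of "I n" b "R n" "D n"] R[of n] by (simp add: A_def)
  then have A: "poly_bounded (\<lambda>n. nd_size (A n))"
    by (rule poly_bounded_mono[OF poly_bounded_add[OF D \<open>poly_bounded len\<close>]])
  have predicts: "1/2 + 1 / poly q (real n)
          \<le> measure_pmf.prob (Z n) {z. (if b then cond_out else nd_out) (A n) (take (I n) z) = z ! I n}"
    if "good n (I n) (R n)" for n
  proof -
    let ?predicted = "{z. (if b then cond_out else nd_out) (A n) (take (I n) z) = z ! I n}"
    let ?guessed = "{z. next_bit_guess (nd_out (D n)) (take (I n) z) b (R n) = z ! I n}"
    have "(if b then cond_out else nd_out) (A n) (take (I n) z)
        = next_bit_guess (nd_out (D n)) (take (I n) z) b (R n)" if "z \<in> set_pmf (Z n)" for z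
      unfolding A_def
      by (rule guess_circuit_correct) (use \<open>good n (I n) (R n)\<close> len[OF that] in \<open>simp add: good_def\<close>)
    then have "?predicted \<inter> set_pmf (Z n) = ?guessed \<inter> set_pmf (Z n)"
      by auto
    then have "measure_pmf.prob (Z n) (?predicted \<inter> set_pmf (Z n))
        = measure_pmf.prob (Z n) (?guessed \<inter> set_pmf (Z n))"
      by (rule arg_cong)
    then show ?thesis
      using that unfolding measure_Int_set_pmf good_def by linarith
  qed
  have "\<exists>\<^sub>F n in sequentially. \<exists>i<len n.
      1/2 + 1 / poly q (real n)
        \<le> measure_pmf.prob (Z n) {z. (if b then cond_out else nd_out) (A n) (take i z) = z ! i}"
    using guess
  proof (rule frequently_elim1)
    fix n
    assume "\<exists>i<len n. \<exists>r. length r = len n - Suc i \<and> 1/2 + 1 / poly q (real n)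
        \<le> measure_pmf.prob (Z n) {z. next_bit_guess (nd_out (D n)) (take i z) b r = z ! i}"
    then have "good n (I n) (R n)"
      using IR unfolding good_def by blast
    then show "\<exists>i<len n. 1/2 + 1 / poly q (real n)
        \<le> measure_pmf.prob (Z n) {z. (if b then cond_out else nd_out) (A n) (take i z) = z ! i}"
      using predicts unfolding good_def by blast
  qed
  then have "infinite {n. \<exists>i<len n. 1/2 + 1 / poly q (real n)
        \<le> measure_pmf.prob (Z n) {z. (if b then cond_out else nd_out) (A n) (take i z) = z ! i}}"
    unfolding cofinite_eq_sequentially[symmetric] frequently_cofinite .
  then show ?thesis
    unfolding predictable_def using A \<open>pos_poly q\<close> by blast
qed

lemma inverse_le_divide_of_mult_le:
  fixes a c \<delta> :: real and M :: nat
  assumes "0 < a" "a * M \<le> c" "1 / a \<le> \<delta>" "M > 0"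
  shows "1 / c \<le> \<delta> / M"
proof -
  have "0 < a * M" "0 < c"
    using assms by (simp, smt (verit) mult_pos_pos of_nat_0_less_iff)
  then have "1 / c \<le> 1 / (a * M)"
    using assms by (intro divide_left_mono) auto
  also have "\<dots> \<le> \<delta> / M"
    using divide_right_mono[OF assms(3), of M] by simp
  finally show ?thesis .
qed

lemma frequent_next_bit_guess:
  assumes len: "\<And>n. \<forall>x\<in>bitstrings n. length (G x) = M n" and M: "\<And>n. M n > 0"
    and advantage: "\<exists>\<^sub>F n in sequentially. 1 / poly p (real n)
      \<le> measure_pmf.prob (U (M n)) {y. d n y} - measure_pmf.prob (map_pmf G (U n)) {y. d n y}"
    and pq: "\<forall>\<^sub>F n in sequentially. 0 < poly p (real n) \<and> poly p (real n) * M n \<le> poly q (real n)"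
  shows "\<exists>\<^sub>F n in sequentially. \<exists>b. \<exists>i<M n. \<exists>r. length r = M n - Suc i \<and>
      1/2 + 1 / poly q (real n)
        \<le> measure_pmf.prob (map_pmf G (U n)) {z. next_bit_guess (d n) (take i z) b r = z ! i}"
  using frequently_eventually_frequently[OF advantage pq]
proof (rule frequently_elim1)
  fix n
  let ?adv = "measure_pmf.prob (U (M n)) {y. d n y} - measure_pmf.prob (map_pmf G (U n)) {y. d n y}"
  assume "1 / poly p (real n) \<le> ?adv \<and> 0 < poly p (real n) \<and> poly p (real n) * M n \<le> poly q (real n)"
  then have "1 / poly q (real n) \<le> ?adv / M n"
    using M[of n] by (intro inverse_le_divide_of_mult_le) auto
  moreover obtain i b r where "i < M n" "length r = M n - Suc i"
    and "1/2 + ?adv / M n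
           \<le> measure_pmf.prob (map_pmf G (U n)) {z. next_bit_guess (d n) (take i z) b r = z ! i}"
    using next_bit_predictor[where d = "d n", OF len[of n] M[of n]] by blast
  ultimately show "\<exists>b. \<exists>i<M n. \<exists>r. length r = M n - Suc i \<and>
      1/2 + 1 / poly q (real n)
        \<le> measure_pmf.prob (map_pmf G (U n)) {z. next_bit_guess (d n) (take i z) b r = z ! i}"
    by (intro exI[of _ b] exI[of _ i] conjI exI[of _ r]) auto
qed

theorem proposition5p3:
  fixes g :: "bool list \<Rightarrow> bool list" and m :: "nat \<Rightarrow> nat"
  assumes "\<And>x. length (g x) = m (length x)"
    and "poly_circuit_computable g"
    and "\<And>n. m n > n"
    and "NP_unpredictable (\<lambda>n. map_pmf g (U n)) m"
    and "coNP_unpredictable (\<lambda>n. map_pmf g (U n)) m"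
  shows "super_bits g m"
proof (rule ccontr)
  assume "\<not> super_bits g m"
  then obtain D p where D: "poly_bounded (\<lambda>n. nd_size (D n))" and "pos_poly p"
    and advantage: "\<exists>\<^sub>F n in sequentially. 1 / poly p (real n)
      \<le> measure_pmf.prob (U (m n)) {y. nd_out (D n) y}
         - measure_pmf.prob (map_pmf g (U n)) {y. nd_out (D n) y}"
    unfolding super_bits_def not_all not_imp not_eventually not_less by blast
  have m: "poly_bounded m"
    using assms(1,2) by (rule poly_bounded_output_length)
  obtain q where "pos_poly q"
    and pq: "\<forall>\<^sub>F n in sequentially. 0 < poly p (real n) \<and> poly p (real n) * m n \<le> poly q (real n)"
    using pos_poly_mult_poly_bounded[OF \<open>pos_poly p\<close> m] by blast
  have "\<forall>x\<in>bitstrings n. length (g x) = m n" "m n > 0" for n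
    using assms(1) assms(3)[of n] by (auto simp: bitstrings_def)
  from frequent_next_bit_guess[OF this advantage pq]
  obtain b where "\<exists>\<^sub>F n in sequentially. \<exists>i<m n. \<exists>r. length r = m n - Suc i \<and>
      1/2 + 1 / poly q (real n) \<le> measure_pmf.prob (map_pmf g (U n))
        {z. next_bit_guess (nd_out (D n)) (take i z) b r = z ! i}"
    unfolding ex_bool_eq frequently_disj_iff by blast
  then have "predictable (if b then cond_out else nd_out) (\<lambda>n. map_pmf g (U n)) m"
    using D m \<open>pos_poly q\<close>
    by (rule predictable_of_frequent_next_bit_guess) (auto simp: set_pmf_U bitstrings_def assms(1))
  then show False
    using assms(4,5) unfolding NP_unpredictable_def coNP_unpredictable_def by (cases b) simp_all
qed

end
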